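(* Let $\dot x=f(x,u)$, $y=h(x)$ be a monotone input-output system endowed with a static input-state characteristic $k_x:{\cal U}\rightrightarrows{\cal X}$. Then $k_x$ is weakly non-decreasing: for all $p,q\in{\cal U}$ with $p\preceq q$ and all $k_p\in k_x(p)$, $k_q\in k_x(q)$, there exist $r_p\in k_x(p)$ and $r_q\in k_x(q)$ with $r_p\preceq k_q$ and $k_p\preceq r_q$.
   Context: An i/o system is $\dot x=f(x,u)$, $y=h(x)$ with state space ${\cal X}\subseteq\mathbb R^n$ (closure of its interior), input space ${\cal U}$, output space ${\cal Y}$ subsets of Euclidean spaces, $f,h$ locally Lipschitz on an open set containing ${\cal X}$, solutions $\phi(t,x_0,{\bf u})$ defined on $[0,\infty)$ and valued in ${\cal X}$ for all locally essentially bounded measurable inputs. All spaces are partially ordered by closed pointed convex cones $K$ via $p\preceq q\iff q-p\in K$; inputs are ordered pointwise a.e. Monotone: $h$ order preserving and $p\preceq q$, ${\bf u}\preceq{\bf v}$ imply $\phi(t,p,{\bf u})\preceq\phi(t,q,{\bf v})$ for all $t\ge0$. Static i/s characteristic: a map $k_x:{\cal U}\rightrightarrows{\cal X}$ with nonempty values such that (i) its graph equals $\{(\bar u,\bar x):f(\bar x,\bar u)=0\}$; (ii) for every constant $\bar u$, every solution $\phi(t,p,\bar u)$ converges as $t\to\infty$ to some point of $k_x(\bar u)$; (iii) static Lyapunov stability at each equilibrium pair (for each $\varepsilon>0$ there is $\delta>0$ such that trajectories of $f(\cdot,\bar u)$ starting within $\delta$ of $\bar x$ and converging to $\bar x$ stay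 within $\varepsilon$ of $\bar x$); (iv) for each $\bar u$, the points of $k_x(\bar u)$ are isolated compact invariant sets for $f(\cdot,\bar u)$ and contain no cycle of heteroclinic chains (in the sense of Thieme). *)

theory Defs
  imports "HOL-Analysis.Analysis"
begin

definition closed_pointed_convex_cone :: "'a::euclidean_space set \<Rightarrow> bool" where
  "closed_pointed_convex_cone K \<longleftrightarrow>
     closed K \<and> convex K \<and> 0 \<in> K \<and> (\<forall>x\<in>K. \<forall>c::real. c \<ge> 0 \<longrightarrow> c *\<^sub>R x \<in> K)
     \<and> K \<inter> uminus ` K = {0}"

definition cone_le :: "'a::euclidean_space set \<Rightarrow> 'a \<Rightarrow> 'a \<Rightarrow> bool" where
  "cone_le K p q \<longleftrightarrow> q - p \<in> K"

definition admissible_input :: "'u::euclidean_space set \<Rightarrow> (real \<Rightarrow> 'u) \<Rightarrow> bool" where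
  "admissible_input U u \<longleftrightarrow>
     u \<in> borel_measurable lborel \<and>
     (\<forall>T. \<exists>B. AE t in lborel. t \<in> {0..T} \<longrightarrow> norm (u t) \<le> B) \<and>
     (\<forall>t\<ge>0. u t \<in> U)"

definition input_le :: "'u::euclidean_space set \<Rightarrow> (real \<Rightarrow> 'u) \<Rightarrow> (real \<Rightarrow> 'u) \<Rightarrow> bool" where
  "input_le KU u v \<longleftrightarrow> (AE t in lborel. t \<ge> 0 \<longrightarrow> cone_le KU (u t) (v t))"

definition locally_lipschitz_on :: "'a::metric_space set \<Rightarrow> ('a \<Rightarrow> 'b::metric_space) \<Rightarrow> bool" where
  "locally_lipschitz_on W g \<longleftrightarrow>
     (\<forall>z\<in>W. \<exists>e>0. \<exists>L. L-lipschitz_on (ball z e \<inter> W) g)"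

text \<open>\<open>phi t x0 u\<close> is the (Caratheodory) solution of xdot = f(x,u) with x(0)=x0.\<close>
definition io_system ::
  "'x::euclidean_space set \<Rightarrow> 'u::euclidean_space set \<Rightarrow> 'y::euclidean_space set \<Rightarrow>
   ('x \<Rightarrow> 'u \<Rightarrow> 'x) \<Rightarrow> ('x \<Rightarrow> 'y) \<Rightarrow> (real \<Rightarrow> 'x \<Rightarrow> (real \<Rightarrow> 'u) \<Rightarrow> 'x) \<Rightarrow> bool" where
  "io_system X U Y f h phi \<longleftrightarrow>
     X = closure (interior X) \<and>
     h ` X \<subseteq> Y \<and>
     (\<exists>W. open W \<and> X \<times> U \<subseteq> W \<and> locally_lipschitz_on W (\<lambda>(x, u). f x u)) \<and>
     (\<exists>W. open W \<and> X \<subseteq> W \<and> locally_lipschitz_on W h) \<and>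
     (\<forall>x0\<in>X. \<forall>u. admissible_input U u \<longrightarrow>
        (\<forall>t\<ge>0. phi t x0 u \<in> X \<and>
           ((\<lambda>s. f (phi s x0 u) (u s)) has_integral (phi t x0 u - x0)) {0..t}))"

definition monotone_io_system ::
  "'x::euclidean_space set \<Rightarrow> 'u::euclidean_space set \<Rightarrow> 'y::euclidean_space set \<Rightarrow>
   'x set \<Rightarrow> 'u set \<Rightarrow> 'y set \<Rightarrow>
   ('x \<Rightarrow> 'u \<Rightarrow> 'x) \<Rightarrow> ('x \<Rightarrow> 'y) \<Rightarrow> (real \<Rightarrow> 'x \<Rightarrow> (real \<Rightarrow> 'u) \<Rightarrow> 'x) \<Rightarrow> bool" where
  "monotone_io_system X U Y KX KU KY f h phi \<longleftrightarrow>
     io_system X U Y f h phi \<and>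
     closed_pointed_convex_cone KX \<and> closed_pointed_convex_cone KU \<and>
     closed_pointed_convex_cone KY \<and>
     (\<forall>p\<in>X. \<forall>q\<in>X. cone_le KX p q \<longrightarrow> cone_le KY (h p) (h q)) \<and>
     (\<forall>p\<in>X. \<forall>q\<in>X. \<forall>u v. admissible_input U u \<longrightarrow> admissible_input U v \<longrightarrow>
        cone_le KX p q \<longrightarrow> input_le KU u v \<longrightarrow>
        (\<forall>t\<ge>0. cone_le KX (phi t p u) (phi t q v)))"

definition omega_limit :: "(real \<Rightarrow> 'x::metric_space) \<Rightarrow> 'x set" where
  "omega_limit g = {y. \<exists>s::nat \<Rightarrow> real. filterlim s at_top sequentially \<and> (g \<circ> s) \<longlonglongrightarrow> y}"

definition alpha_limit :: "(real \<Rightarrow> 'x::metric_space) \<Rightarrow> 'x set" where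
  "alpha_limit g = {y. \<exists>s::nat \<Rightarrow> real. filterlim s at_bot sequentially \<and> (g \<circ> s) \<longlonglongrightarrow> y}"

definition total_trajectory ::
  "'x::euclidean_space set \<Rightarrow> (real \<Rightarrow> 'x \<Rightarrow> (real \<Rightarrow> 'u) \<Rightarrow> 'x) \<Rightarrow> 'u \<Rightarrow> (real \<Rightarrow> 'x) \<Rightarrow> bool" where
  "total_trajectory X phi ub g \<longleftrightarrow>
     (\<forall>s. g s \<in> X) \<and> (\<forall>s. \<forall>t\<ge>0. phi t (g s) (\<lambda>_. ub) = g (s + t))"

definition invariant_set ::
  "(real \<Rightarrow> 'x \<Rightarrow> (real \<Rightarrow> 'u) \<Rightarrow> 'x) \<Rightarrow> 'u \<Rightarrow> 'x set \<Rightarrow> bool" where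
  "invariant_set phi ub A \<longleftrightarrow> (\<forall>t\<ge>0. (\<lambda>x. phi t x (\<lambda>_. ub)) ` A = A)"

definition isolated_compact_invariant ::
  "'x::euclidean_space set \<Rightarrow> (real \<Rightarrow> 'x \<Rightarrow> (real \<Rightarrow> 'u) \<Rightarrow> 'x) \<Rightarrow> 'u \<Rightarrow> 'x set \<Rightarrow> bool" where
  "isolated_compact_invariant X phi ub M \<longleftrightarrow>
     M \<subseteq> X \<and> compact M \<and> invariant_set phi ub M \<and>
     (\<exists>N. open N \<and> M \<subseteq> N \<and>
        (\<forall>A. A \<subseteq> N \<inter> X \<longrightarrow> invariant_set phi ub A \<longrightarrow> A \<subseteq> M))"

text \<open>Thieme: M1 is chained to M2 if there is x not in M1 \<union> M2 lying in the stable set of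
  M2 and the unstable set of M1.\<close>
definition chained_to ::
  "'x::euclidean_space set \<Rightarrow> (real \<Rightarrow> 'x \<Rightarrow> (real \<Rightarrow> 'u) \<Rightarrow> 'x) \<Rightarrow> 'u \<Rightarrow> 'x set \<Rightarrow> 'x set \<Rightarrow> bool" where
  "chained_to X phi ub M1 M2 \<longleftrightarrow>
     (\<exists>x\<in>X. x \<notin> M1 \<union> M2 \<and>
        omega_limit (\<lambda>t. phi t x (\<lambda>_. ub)) \<noteq> {} \<and>
        omega_limit (\<lambda>t. phi t x (\<lambda>_. ub)) \<subseteq> M2 \<and>
        (\<exists>g. total_trajectory X phi ub g \<and> g 0 = x \<and>
             alpha_limit g \<noteq> {} \<and> alpha_limit g \<subseteq> M1))"

definition has_heteroclinic_cycle ::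
  "'x::euclidean_space set \<Rightarrow> (real \<Rightarrow> 'x \<Rightarrow> (real \<Rightarrow> 'u) \<Rightarrow> 'x) \<Rightarrow> 'u \<Rightarrow> 'x set set \<Rightarrow> bool" where
  "has_heteroclinic_cycle X phi ub \<M> \<longleftrightarrow>
     (\<exists>Ms. Ms \<noteq> [] \<and> set Ms \<subseteq> \<M> \<and>
        (\<forall>i<length Ms. chained_to X phi ub (Ms ! i) (Ms ! ((i + 1) mod length Ms))))"

definition static_is_characteristic ::
  "'x::euclidean_space set \<Rightarrow> 'u::euclidean_space set \<Rightarrow> ('x \<Rightarrow> 'u \<Rightarrow> 'x) \<Rightarrow>
   (real \<Rightarrow> 'x \<Rightarrow> (real \<Rightarrow> 'u) \<Rightarrow> 'x) \<Rightarrow> ('u \<Rightarrow> 'x set) \<Rightarrow> bool" where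
  "static_is_characteristic X U f phi kx \<longleftrightarrow>
     (\<forall>ub\<in>U. kx ub \<noteq> {}) \<and>
     {(ub, xb). ub \<in> U \<and> xb \<in> kx ub} = {(ub, xb). ub \<in> U \<and> xb \<in> X \<and> f xb ub = 0} \<and>
     (\<forall>ub\<in>U. \<forall>p\<in>X. \<exists>xb\<in>kx ub. ((\<lambda>t. phi t p (\<lambda>_. ub)) \<longlongrightarrow> xb) at_top) \<and>
     (\<forall>ub\<in>U. \<forall>xb\<in>kx ub. \<forall>\<epsilon>>0. \<exists>\<delta>>0. \<forall>p\<in>X.
        dist p xb < \<delta> \<longrightarrow> ((\<lambda>t. phi t p (\<lambda>_. ub)) \<longlongrightarrow> xb) at_top \<longrightarrow>
        (\<forall>t\<ge>0. dist (phi t p (\<lambda>_. ub)) xb < \<epsilon>)) \<and>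
     (\<forall>ub\<in>U. (\<forall>xb\<in>kx ub. isolated_compact_invariant X phi ub {xb}) \<and>
        \<not> has_heteroclinic_cycle X phi ub ((\<lambda>xb. {xb}) ` kx ub))"

end

theory Submission
  imports Defs
begin

text \<open>An equilibrium of the larger constant input bounds from above the trajectory that starts
  at it under the smaller input, because the trajectory under the larger input stays put.
  The limit of that trajectory is a point of the characteristic at the smaller input, and the
  bound passes to the limit since the cone is closed. The dual argument gives the lower bound.\<close>

lemma admissible_input_const: "c \<in> U \<Longrightarrow> admissible_input U (\<lambda>_. c)"
  unfolding admissible_input_def by auto

lemma input_le_const: "cone_le K p q \<Longrightarrow> input_le K (\<lambda>_. p) (\<lambda>_. q)"
  unfolding input_le_def by auto

lemma cone_le_refl: "closed_pointed_convex_cone K \<Longrightarrow> cone_le K x x"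
  unfolding closed_pointed_convex_cone_def cone_le_def by simp

lemma cone_le_tendsto:
  assumes "closed K" "\<not> trivial_limit F" "(g \<longlongrightarrow> a) F" "(g' \<longlongrightarrow> b) F"
    and "\<forall>\<^sub>F t in F. cone_le K (g t) (g' t)"
  shows "cone_le K a b"
proof -
  have "((\<lambda>t. g' t - g t) \<longlongrightarrow> b - a) F"
    using assms(3,4) by (intro tendsto_intros)
  with assms(1,2,5) show ?thesis
    unfolding cone_le_def by (auto intro: Lim_in_closed_set)
qed

lemma monotone_io_system_const_input_mono:
  assumes "monotone_io_system X U Y KX KU KY f h phi"
    and "x \<in> X" "p \<in> U" "q \<in> U" "cone_le KU p q" "t \<ge> 0"
  shows "cone_le KX (phi t x (\<lambda>_. p)) (phi t x (\<lambda>_. q))"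
proof -
  have "cone_le KX x x"
    using assms(1) unfolding monotone_io_system_def by (auto intro: cone_le_refl)
  with assms show ?thesis
    unfolding monotone_io_system_def
    by (metis admissible_input_const input_le_const)
qed

lemma static_is_characteristic_subset:
  assumes "static_is_characteristic X U f phi kx" "ub \<in> U"
  shows "kx ub \<subseteq> X"
proof
  fix xb assume "xb \<in> kx ub"
  with assms(2) have "(ub, xb) \<in> {(ub, xb). ub \<in> U \<and> xb \<in> kx ub}" by simp
  with assms(1) show "xb \<in> X"
    unfolding static_is_characteristic_def by auto
qed

lemma static_is_characteristic_tendsto:
  assumes "static_is_characteristic X U f phi kx" "ub \<in> U" "x \<in> X"
  obtains xb where "xb \<in> kx ub" "((\<lambda>t. phi t x (\<lambda>_. ub)) \<longlongrightarrow> xb) at_top"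
  using assms unfolding static_is_characteristic_def by blast

lemma static_is_characteristic_equilibrium:
  assumes "static_is_characteristic X U f phi kx" "ub \<in> U" "xb \<in> kx ub" "t \<ge> 0"
  shows "phi t xb (\<lambda>_. ub) = xb"
proof -
  have "invariant_set phi ub {xb}"
    using assms(1-3)
    unfolding static_is_characteristic_def isolated_compact_invariant_def by blast
  with assms(4) show ?thesis
    unfolding invariant_set_def by simp
qed

lemma static_is_characteristic_below:
  assumes mono: "monotone_io_system X U Y KX KU KY f h phi"
    and char: "static_is_characteristic X U f phi kx"
    and "p \<in> U" "q \<in> U" "cone_le KU p q" "k_q \<in> kx q"
  shows "\<exists>r_p\<in>kx p. cone_le KX r_p k_q"
proof -
  have "k_q \<in> X"
    using static_is_characteristic_subset[OF char] assms(4,6) by blast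
  then obtain r_p where "r_p \<in> kx p" and r_p: "((\<lambda>t. phi t k_q (\<lambda>_. p)) \<longlongrightarrow> r_p) at_top"
    using static_is_characteristic_tendsto[OF char \<open>p \<in> U\<close>] by blast
  have "cone_le KX (phi t k_q (\<lambda>_. p)) k_q" if "t \<ge> 0" for t
    using monotone_io_system_const_input_mono[OF mono \<open>k_q \<in> X\<close> assms(3-5) that]
      static_is_characteristic_equilibrium[OF char assms(4,6) that] by simp
  then have "\<forall>\<^sub>F t in at_top. cone_le KX (phi t k_q (\<lambda>_. p)) k_q"
    by (auto simp: eventually_at_top_linorder)
  moreover have "closed KX"
    using mono unfolding monotone_io_system_def closed_pointed_convex_cone_def by blast
  ultimately have "cone_le KX r_p k_q"
    using cone_le_tendsto[OF _ trivial_limit_at_top_linorder r_p tendsto_const] by blast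
  with \<open>r_p \<in> kx p\<close> show ?thesis by blast
qed

lemma static_is_characteristic_above:
  assumes mono: "monotone_io_system X U Y KX KU KY f h phi"
    and char: "static_is_characteristic X U f phi kx"
    and "p \<in> U" "q \<in> U" "cone_le KU p q" "k_p \<in> kx p"
  shows "\<exists>r_q\<in>kx q. cone_le KX k_p r_q"
proof -
  have "k_p \<in> X"
    using static_is_characteristic_subset[OF char] assms(3,6) by blast
  then obtain r_q where "r_q \<in> kx q" and r_q: "((\<lambda>t. phi t k_p (\<lambda>_. q)) \<longlongrightarrow> r_q) at_top"
    using static_is_characteristic_tendsto[OF char \<open>q \<in> U\<close>] by blast
  have "cone_le KX k_p (phi t k_p (\<lambda>_. q))" if "t \<ge> 0" for t
    using monotone_io_system_const_input_mono[OF mono \<open>k_p \<in> X\<close> assms(3-5) that]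
      static_is_characteristic_equilibrium[OF char assms(3,6) that] by simp
  then have "\<forall>\<^sub>F t in at_top. cone_le KX k_p (phi t k_p (\<lambda>_. q))"
    by (auto simp: eventually_at_top_linorder)
  moreover have "closed KX"
    using mono unfolding monotone_io_system_def closed_pointed_convex_cone_def by blast
  ultimately have "cone_le KX k_p r_q"
    using cone_le_tendsto[OF _ trivial_limit_at_top_linorder tendsto_const r_q] by blast
  with \<open>r_q \<in> kx q\<close> show ?thesis by blast
qed

theorem lemma1:
  fixes X :: "'x::euclidean_space set" and U :: "'u::euclidean_space set"
    and Y :: "'y::euclidean_space set"
    and KX :: "'x set" and KU :: "'u set" and KY :: "'y set"
    and f :: "'x \<Rightarrow> 'u \<Rightarrow> 'x" and h :: "'x \<Rightarrow> 'y"
    and phi :: "real \<Rightarrow> 'x \<Rightarrow> (real \<Rightarrow> 'u) \<Rightarrow> 'x" and kx :: "'u \<Rightarrow> 'x set"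
  assumes "monotone_io_system X U Y KX KU KY f h phi"
    and "static_is_characteristic X U f phi kx"
  shows "\<forall>p\<in>U. \<forall>q\<in>U. cone_le KU p q \<longrightarrow>
           (\<forall>k_p\<in>kx p. \<forall>k_q\<in>kx q.
              (\<exists>r_p\<in>kx p. \<exists>r_q\<in>kx q. cone_le KX r_p k_q \<and> cone_le KX k_p r_q))"
  using static_is_characteristic_below[OF assms] static_is_characteristic_above[OF assms]
  by blast

end
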